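(* Let $(X,T)$ be a topological dynamical system and $x\in X$. Then for every non-atomic $T$-invariant Borel probability measure $\mu$ on $X$, $\mu(BP(x))=0$, where $BP(x)=\{y\in X:(x,y)\text{ is Banach proximal}\}$.
   Context: A topological dynamical system $(X,T)$ consists of a non-empty compact metric space $(X,d)$ and a continuous map $T:X\to X$. A measure $\mu$ is non-atomic if $\mu(\{z\})=0$ for every $z\in X$. A set $F\subset\mathbb{Z}_+$ has Banach density one if for every $\lambda<1$ there is $N\ge1$ with $\#(F\cap I)\ge\lambda\,\#(I)$ for every interval of integers $I\subset\mathbb{Z}_+$ with $\#(I)\ge N$. A pair $(x,y)$ is Banach proximal if for every $\varepsilon>0$ the set $\{n\in\mathbb{Z}_+: d(T^nx,T^ny)<\varepsilon\}$ has Banach density one. *)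

theory Defs
  imports "HOL-Probability.Probability"
begin

definition banach_density_one :: "nat set \<Rightarrow> bool" where
  "banach_density_one F \<longleftrightarrow>
     (\<forall>lam::real. lam < 1 \<longrightarrow>
        (\<exists>N::nat. N \<ge> 1 \<and>
           (\<forall>a k::nat. k \<ge> N \<longrightarrow>
              real (card (F \<inter> {a..<a+k})) \<ge> lam * real k)))"

definition banach_proximal :: "('a::metric_space \<Rightarrow> 'a) \<Rightarrow> 'a \<Rightarrow> 'a \<Rightarrow> bool" where
  "banach_proximal T x y \<longleftrightarrow>
     (\<forall>\<epsilon>>0. banach_density_one {n. dist ((T ^^ n) x) ((T ^^ n) y) < \<epsilon>})"

definition BP :: "('a::metric_space \<Rightarrow> 'a) \<Rightarrow> 'a \<Rightarrow> 'a set" where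
  "BP T x = {y. banach_proximal T x y}"

end

theory Submission
  imports Defs
begin

(* Measurability: Banach density one and Banach proximality can be tested along
   the countable families lambda = 1 - 1/(j+1) and epsilon = 1/(m+1), so BP(x) is
   obtained from the Borel functions y |-> #{n in I. d(T^n x, T^n y) < epsilon}
   by countable unions and intersections.

   Measure: given delta > 0, compactness and non-atomicity yield epsilon > 0 with
   mu(ball z epsilon) < delta for all z; by invariance each set
   E_n = {y. d(T^n x, T^n y) < epsilon} = T^-n (ball (T^n x) epsilon) has measure
   at most delta. Markov's inequality applied to sum_{n<k} 1_{E_n} bounds the set
   D_k of points visiting the E_n at least k/2 times before time k by 2 delta.
   Every y in BP(x) lies in D_k for all large k, so mu(BP(x)) <= 2 delta. *)

lemma continuous_on_funpow:
  fixes T :: "'a::topological_space \<Rightarrow> 'a"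
  assumes "continuous_on UNIV T"
  shows "continuous_on UNIV (T ^^ n)"
  by (induction n) (auto intro: continuous_on_compose2[OF assms])

lemma measure_funpow_vimage:
  assumes "space M = UNIV" "T \<in> measurable M M"
    and inv: "\<And>A. A \<in> sets M \<Longrightarrow> measure M (T -` A) = measure M A"
    and "A \<in> sets M"
  shows "measure M ((T ^^ n) -` A) = measure M A"
  using \<open>A \<in> sets M\<close>
proof (induction n arbitrary: A)
  case (Suc n)
  have "T -` A \<in> sets M"
    using measurable_sets[OF assms(2) Suc.prems] assms(1) by simp
  have "measure M ((T ^^ Suc n) -` A) = measure M ((T ^^ n) -` (T -` A))"
    by (simp only: funpow.simps(2) vimage_comp)
  also have "\<dots> = measure M (T -` A)"
    by (rule Suc.IH) fact
  also have "\<dots> = measure M A"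
    by (rule inv) fact
  finally show ?case .
qed simp

lemma borel_measurable_orbit_dist:
  fixes T :: "'a::metric_space \<Rightarrow> 'a"
  assumes "continuous_on UNIV T"
  shows "(\<lambda>y. dist ((T ^^ n) x) ((T ^^ n) y)) \<in> borel_measurable borel"
  by (intro borel_measurable_continuous_onI continuous_on_dist continuous_on_const
      continuous_on_funpow assms)

lemma borel_measurable_card_Int_Collect [measurable]:
  fixes P :: "nat \<Rightarrow> 'a \<Rightarrow> bool"
  assumes [measurable]: "\<And>n. Measurable.pred M (P n)" and "finite I"
  shows "(\<lambda>y. real (card (I \<inter> {n. P n y}))) \<in> borel_measurable M"
proof -
  have "real (card (I \<inter> {n. P n y})) = (\<Sum>n\<in>I. indicator {y. P n y} y)" for y
    using \<open>finite I\<close> by (simp add: indicator_def)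
  then show ?thesis using \<open>finite I\<close> by simp
qed

lemma banach_density_one_iff:
  "banach_density_one F \<longleftrightarrow> (\<forall>j::nat. \<exists>N\<ge>1. \<forall>a k. N \<le> k \<longrightarrow>
      (1 - 1 / real (Suc j)) * real k \<le> real (card ({a..<a+k} \<inter> F)))"
  (is "_ \<longleftrightarrow> (\<forall>j. ?dense j)")
proof
  assume F: "banach_density_one F"
  show "\<forall>j. ?dense j"
  proof
    fix j :: nat
    have "1 - 1 / real (Suc j) < 1" by simp
    with F show "?dense j"
      unfolding banach_density_one_def by (simp add: Int_commute)
  qed
next
  assume F: "\<forall>j. ?dense j"
  show "banach_density_one F"
    unfolding banach_density_one_def
  proof (intro allI impI)
    fix lam :: real assume "lam < 1"
    then obtain j where j: "inverse (real (Suc j)) < 1 - lam"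
      using reals_Archimedean[of "1 - lam"] by auto
    obtain N where "N \<ge> 1"
      and N: "\<And>a k. N \<le> k \<Longrightarrow> (1 - 1 / real (Suc j)) * real k \<le> real (card ({a..<a+k} \<inter> F))"
      using F by blast
    have "lam * real k \<le> real (card (F \<inter> {a..<a+k}))" if "N \<le> k" for a k
    proof -
      have "lam * real k \<le> (1 - 1 / real (Suc j)) * real k"
        using j by (intro mult_right_mono) (auto simp: inverse_eq_divide)
      also have "\<dots> \<le> real (card (F \<inter> {a..<a+k}))"
        using N[OF that] by (simp add: Int_commute)
      finally show ?thesis .
    qed
    with \<open>N \<ge> 1\<close> show "\<exists>N\<ge>1. \<forall>a k. N \<le> k \<longrightarrow> lam * real k \<le> real (card (F \<inter> {a..<a+k}))"
      by blast
  qed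
qed

lemma banach_density_one_mono:
  assumes "F \<subseteq> G" and "banach_density_one F"
  shows "banach_density_one G"
  unfolding banach_density_one_def
proof (intro allI impI)
  fix lam :: real assume "lam < 1"
  then obtain N where "N \<ge> 1"
    and N: "\<And>a k. N \<le> k \<Longrightarrow> lam * real k \<le> real (card (F \<inter> {a..<a+k}))"
    using assms(2) unfolding banach_density_one_def by blast
  have "card (F \<inter> {a..<a+k}) \<le> card (G \<inter> {a..<a+k})" for a k
    using assms(1) by (intro card_mono) auto
  with N \<open>N \<ge> 1\<close> show "\<exists>N\<ge>1. \<forall>a k. N \<le> k \<longrightarrow> lam * real k \<le> real (card (G \<inter> {a..<a+k}))"
    by (meson of_nat_le_iff order_trans)
qed

lemma banach_density_one_initial_half:
  assumes "banach_density_one F"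
  shows "\<exists>N. \<forall>k\<ge>N. real k / 2 \<le> real (card ({..<k} \<inter> F))"
proof -
  have "(1/2 :: real) < 1" by simp
  with assms obtain N where "\<And>a k. N \<le> k \<Longrightarrow> 1/2 * real k \<le> real (card (F \<inter> {a..<a+k}))"
    unfolding banach_density_one_def by blast
  from this[of _ 0] show ?thesis by (auto simp: Int_commute atLeast0LessThan)
qed

lemma banach_proximal_iff:
  "banach_proximal T x y \<longleftrightarrow>
     (\<forall>m::nat. banach_density_one {n. dist ((T ^^ n) x) ((T ^^ n) y) < 1 / real (Suc m)})"
proof
  assume "\<forall>m::nat. banach_density_one {n. dist ((T ^^ n) x) ((T ^^ n) y) < 1 / real (Suc m)}"
  then show "banach_proximal T x y"
    unfolding banach_proximal_def
  proof (intro allI impI)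
    fix e :: real assume "e > 0"
    then obtain m where m: "inverse (real (Suc m)) < e"
      using reals_Archimedean by blast
    then have "{n. dist ((T ^^ n) x) ((T ^^ n) y) < 1 / real (Suc m)} \<subseteq> {n. dist ((T ^^ n) x) ((T ^^ n) y) < e}"
      by (auto simp: inverse_eq_divide)
    then show "banach_density_one {n. dist ((T ^^ n) x) ((T ^^ n) y) < e}"
      using banach_density_one_mono \<open>\<forall>m. _\<close> by blast
  qed
qed (simp add: banach_proximal_def)

(* The set BP(x) is Borel: it is a countable Boolean combination of sets
   defined by Borel counting functions. *)
lemma BP_borel:
  fixes T :: "'a::metric_space \<Rightarrow> 'a"
  assumes "continuous_on UNIV T"
  shows "BP T x \<in> sets borel"
proof -
  note [measurable] = borel_measurable_orbit_dist[OF assms]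
  have "{y \<in> space borel. \<forall>m j::nat. \<exists>N\<ge>1. \<forall>a k. N \<le> k \<longrightarrow> (1 - 1 / real (Suc j)) * real k
          \<le> real (card ({a..<a+k} \<inter> {n. dist ((T^^n) x) ((T^^n) y) < 1 / real (Suc m)}))} \<in> sets borel"
    by measurable
  then show ?thesis
    by (simp add: BP_def banach_proximal_iff banach_density_one_iff)
qed

(* Balls around z shrink to {z}, so their measure tends to that of {z}. *)
lemma measure_small_ball:
  fixes M :: "'a::metric_space measure"
  assumes "finite_measure M" "sets M = sets borel" "measure M {z} < \<delta>"
  shows "\<exists>r>0. measure M (ball z r) < \<delta>"
proof -
  interpret finite_measure M by fact
  define B where "B n = ball z (1 / real (Suc n))" for n
  have dec: "decseq B"
  proof (rule decseq_SucI)
    show "B (Suc n) \<subseteq> B n" for n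
      unfolding B_def by (rule subset_ball) (simp add: field_simps)
  qed
  have sets: "range B \<subseteq> sets M"
    unfolding B_def assms(2) by auto
  have Inter: "(\<Inter>n. B n) = {z}"
  proof safe
    fix w assume w: "w \<in> (\<Inter>n. B n)"
    show "w = z"
    proof (rule ccontr)
      assume "w \<noteq> z"
      then obtain n where "inverse (real (Suc n)) < dist z w"
        using reals_Archimedean[of "dist z w"] by auto
      moreover have "dist z w < 1 / real (Suc n)"
        using w by (auto simp: B_def)
      ultimately show False by (simp add: inverse_eq_divide)
    qed
  qed (simp add: B_def)
  have "(\<lambda>n. measure M (B n)) \<longlonglongrightarrow> measure M {z}"
    using finite_Lim_measure_decseq[OF sets dec] by (simp add: Inter)
  then have "eventually (\<lambda>n. measure M (B n) < \<delta>) sequentially"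
    using assms(3) by (rule order_tendstoD)
  then obtain n where "measure M (B n) < \<delta>"
    by (auto simp: eventually_sequentially)
  then show ?thesis
    unfolding B_def by (intro exI[of _ "1 / real (Suc n)"]) simp
qed

(* For a non-atomic finite measure on a compact metric space, all balls of
   some fixed radius have measure below a prescribed delta (Lebesgue number
   argument on the cover by open sets of small measure). *)
lemma uniformly_small_balls:
  fixes M :: "'a::metric_space measure"
  assumes "compact (UNIV :: 'a set)" "finite_measure M" "sets M = sets borel"
    and "\<And>z. measure M {z} = 0" "\<delta> > 0"
  obtains \<epsilon> where "\<epsilon> > 0" "\<And>z. measure M (ball z \<epsilon>) < \<delta>"
proof -
  interpret finite_measure M by fact
  define \<G> where "\<G> = {G. open G \<and> measure M G < \<delta>}"
  have cover: "UNIV \<subseteq> \<Union>\<G>"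
  proof
    fix z :: 'a
    have "measure M {z} < \<delta>"
      using assms(4,5) by simp
    then obtain r where "r > 0" "measure M (ball z r) < \<delta>"
      using measure_small_ball[OF assms(2,3)] by blast
    then show "z \<in> \<Union>\<G>"
      unfolding \<G>_def by (intro UnionI[of "ball z r"]) auto
  qed
  have "open G" if "G \<in> \<G>" for G
    using that by (simp add: \<G>_def)
  then obtain \<epsilon> where "\<epsilon> > 0" and \<epsilon>: "\<And>z. z \<in> UNIV \<Longrightarrow> \<exists>G\<in>\<G>. ball z \<epsilon> \<subseteq> G"
    using Heine_Borel_lemma[OF assms(1) cover] by blast
  have "measure M (ball z \<epsilon>) < \<delta>" for z
  proof -
    obtain G where "G \<in> \<G>" "ball z \<epsilon> \<subseteq> G"
      using \<epsilon>[of z] by blast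
    then have "open G" "measure M G < \<delta>" "ball z \<epsilon> \<subseteq> G"
      by (simp_all add: \<G>_def)
    moreover have "measure M (ball z \<epsilon>) \<le> measure M G"
      using calculation assms(3) by (intro finite_measure_mono) auto
    ultimately show ?thesis by linarith
  qed
  with \<open>\<epsilon> > 0\<close> show ?thesis by (rule that)
qed

(* Markov inequality for visit counts: if every event E_n has measure at most
   delta, then the points lying in at least c of E_0, ..., E_(k-1) form a set of
   measure at most k delta / c. *)
lemma measure_often_in_le:
  assumes "finite_measure M" and E: "\<And>n. E n \<in> sets M" "\<And>n. measure M (E n) \<le> \<delta>"
    and "c > 0"
  shows "measure M {y\<in>space M. c \<le> real (card ({..<k} \<inter> {n. y \<in> E n}))} \<le> real k * \<delta> / c"
proof -
  interpret finite_measure M by fact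
  define u where "u y = (\<Sum>n<k. indicator (E n) y :: real)" for y
  have int: "integrable M u"
    unfolding u_def using E(1) by (auto intro!: integrable_real_indicator simp: emeasure_eq_measure)
  have "u y = real (card ({..<k} \<inter> {n. y \<in> E n}))" for y
    by (simp add: u_def indicator_def)
  then have "measure M {y\<in>space M. c \<le> real (card ({..<k} \<inter> {n. y \<in> E n}))}
      = measure M {y\<in>space M. c \<le> u y}" by simp
  also have "\<dots> \<le> (\<integral>y. u y \<partial>M) / c"
    using integral_Markov_inequality_measure[OF int sets.top _ \<open>c > 0\<close>]
    by (simp add: u_def sum_nonneg)
  also have "\<dots> \<le> real k * \<delta> / c"
  proof (rule divide_right_mono)
    have "(\<integral>y. u y \<partial>M) = (\<Sum>n<k. measure M (E n))"
      unfolding u_def using E(1)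
      by (subst Bochner_Integration.integral_sum) (auto intro!: integrable_real_indicator simp: emeasure_eq_measure)
    also have "\<dots> \<le> real k * \<delta>"
      using sum_bounded_above[of "{..<k}" "\<lambda>n. measure M (E n)" \<delta>] E(2) by simp
    finally show "(\<integral>y. u y \<partial>M) \<le> real k * \<delta>" .
  qed (use \<open>c > 0\<close> in simp)
  finally show ?thesis .
qed

lemma measure_liminf_le:
  fixes D :: "nat \<Rightarrow> 'a set"
  assumes "finite_measure M" and D: "\<And>k. D k \<in> sets M" "\<And>k. k \<ge> K \<Longrightarrow> measure M (D k) \<le> c"
  shows "measure M (\<Union>N. \<Inter>k\<in>{N..}. D k) \<le> c"
proof -
  interpret finite_measure M by fact
  define C where "C N = (\<Inter>k\<in>{N..}. D k)" for N
  have C_sets: "C N \<in> sets M" for N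
    unfolding C_def by (intro sets.countable_INT') (use D(1) in auto)
  have "incseq C"
    unfolding C_def incseq_def by auto
  then have lim: "(\<lambda>N. measure M (C N)) \<longlonglongrightarrow> measure M (\<Union>N. C N)"
    using C_sets by (intro finite_Lim_measure_incseq) auto
  have "measure M (C N) \<le> c" if "N \<ge> K" for N
  proof -
    have "measure M (C N) \<le> measure M (D N)"
      using D(1) by (intro finite_measure_mono) (auto simp: C_def)
    then show ?thesis using D(2)[OF that] by simp
  qed
  then have "\<exists>N0. \<forall>N\<ge>N0. measure M (C N) \<le> c" by blast
  from LIMSEQ_le_const2[OF lim this] show ?thesis by (simp add: C_def)
qed

lemma measure_BP_le:
  fixes T :: "'a::metric_space \<Rightarrow> 'a"
  assumes "finite_measure M" "sets M = sets borel" "continuous_on UNIV T" "e > 0"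
    and hits: "\<And>n. measure M {y. dist ((T ^^ n) x) ((T ^^ n) y) < e} \<le> \<delta>"
  shows "measure M (BP T x) \<le> 2 * \<delta>"
proof -
  interpret finite_measure M by fact
  have space: "space M = UNIV"
    using sets_eq_imp_space_eq[OF assms(2)] by simp
  note [measurable] = borel_measurable_orbit_dist[OF assms(3)]
  define E where "E n = {y. dist ((T ^^ n) x) ((T ^^ n) y) < e}" for n
  define D where "D k = {y\<in>space M. real k / 2 \<le> real (card ({..<k} \<inter> {n. y \<in> E n}))}" for k
  have E_sets: "E n \<in> sets M" for n
  proof -
    have "{y\<in>space borel. dist ((T ^^ n) x) ((T ^^ n) y) < e} \<in> sets borel" by measurable
    then show ?thesis by (simp add: E_def assms(2))
  qed
  have D_sets: "D k \<in> sets M" for k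
  proof -
    have "{y\<in>space borel. real k / 2 \<le> real (card ({..<k} \<inter> {n. dist ((T ^^ n) x) ((T ^^ n) y) < e}))} \<in> sets borel"
      by measurable
    then show ?thesis by (simp add: D_def E_def assms(2) space)
  qed
  have E_small: "measure M (E n) \<le> \<delta>" for n
    using hits by (simp add: E_def)
  have D_small: "measure M (D k) \<le> 2 * \<delta>" if "k \<ge> 1" for k
    using measure_often_in_le[where E = E and c = "real k / 2" and k = k, OF assms(1) E_sets E_small] that
    by (simp add: D_def)
  have "BP T x \<subseteq> (\<Union>N. \<Inter>k\<in>{N..}. D k)"
  proof
    fix y assume "y \<in> BP T x"
    then have "banach_density_one {n. y \<in> E n}"
      using \<open>e > 0\<close> by (simp add: BP_def banach_proximal_def E_def)
    then obtain N where "\<And>k. k \<ge> N \<Longrightarrow> real k / 2 \<le> real (card ({..<k} \<inter> {n. y \<in> E n}))"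
      using banach_density_one_initial_half by blast
    then show "y \<in> (\<Union>N. \<Inter>k\<in>{N..}. D k)"
      by (auto simp: D_def space)
  qed
  then have "measure M (BP T x) \<le> measure M (\<Union>N. \<Inter>k\<in>{N..}. D k)"
    using D_sets by (intro finite_measure_mono) auto
  also have "\<dots> \<le> 2 * \<delta>"
    using measure_liminf_le[OF assms(1) D_sets D_small] .
  finally show ?thesis .
qed

theorem mainTheorem14:
  fixes T :: "'a::metric_space \<Rightarrow> 'a" and x :: 'a and \<mu> :: "'a measure"
  assumes "compact (UNIV :: 'a set)"
    and "continuous_on UNIV T"
    and "prob_space \<mu>"
    and "sets \<mu> = sets borel"
    and "\<And>A. A \<in> sets borel \<Longrightarrow> measure \<mu> (T -` A) = measure \<mu> A"
    and "\<And>z. measure \<mu> {z} = 0"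
  shows "BP T x \<in> sets \<mu> \<and> measure \<mu> (BP T x) = 0"
proof -
  interpret prob_space \<mu> by fact
  have space: "space \<mu> = UNIV"
    using sets_eq_imp_space_eq[OF assms(4)] by simp
  have T_meas: "T \<in> measurable \<mu> \<mu>"
    using borel_measurable_continuous_onI[OF assms(2)] measurable_cong_sets[OF assms(4) assms(4)] by simp
  have bound: "measure \<mu> (BP T x) \<le> 2 * \<delta>" if \<delta>_pos: "\<delta> > 0" for \<delta>
  proof -
    obtain \<epsilon> where "\<epsilon> > 0" and ball_small: "\<And>z. measure \<mu> (ball z \<epsilon>) < \<delta>"
      using uniformly_small_balls[OF assms(1) finite_measure_axioms assms(4,6) \<delta>_pos] by blast
    have "measure \<mu> {y. dist ((T ^^ n) x) ((T ^^ n) y) < \<epsilon>} \<le> \<delta>" for n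
    proof -
      have "{y. dist ((T ^^ n) x) ((T ^^ n) y) < \<epsilon>} = (T ^^ n) -` ball ((T ^^ n) x) \<epsilon>"
        by auto
      then show ?thesis
        using measure_funpow_vimage[OF space T_meas, of "ball ((T ^^ n) x) \<epsilon>" n] ball_small[of "(T ^^ n) x"]
          assms(4,5) by simp
    qed
    then show ?thesis
      using measure_BP_le[OF finite_measure_axioms assms(4,2) \<open>\<epsilon> > 0\<close>] by blast
  qed
  have "measure \<mu> (BP T x) \<le> 0"
  proof (rule field_le_epsilon)
    fix e :: real assume "e > 0"
    then show "measure \<mu> (BP T x) \<le> 0 + e"
      using bound[of "e / 2"] by simp
  qed
  then show ?thesis
    using BP_borel[OF assms(2)] assms(4) measure_nonneg[of \<mu> "BP T x"] by simp
qed

end
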